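(* Let $\Omega\subset\mathbb{R}^n$ be open and let $L$ be the operator $$L=\Delta_x+\Delta_y+2\sum_i\frac{\partial^2}{\partial x_i\partial y_i}-4\sum_{i,j}X_iX_j\frac{\partial^2}{\partial x_i\partial y_j}$$ on $\{(x,y)\in\Omega\times\Omega:x\ne y\}$, where $X=|y-x|$ and $X_i=(y_i-x_i)/X$. Then for every smooth function $v$ on $\Omega$, with $\tilde X=(X_1,\dots,X_n)=\frac{y-x}{|y-x|}$, $$L\Big\{\big[\nabla v(y)-\nabla v(x)\big]\cdot\tilde X\Big\}=\big[\nabla\Delta v(y)-\nabla\Delta v(x)\big]\cdot\tilde X.$$ *)

theory Defs
  imports "HOL-Analysis.Analysis"
begin

definition pd :: "'n::finite \<Rightarrow> (real^'n \<Rightarrow> real) \<Rightarrow> real^'n \<Rightarrow> real" where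
  "pd i f x = deriv (\<lambda>t. f (x + t *\<^sub>R axis i 1)) 0"

fun iter_pd :: "'n::finite list \<Rightarrow> (real^'n \<Rightarrow> real) \<Rightarrow> real^'n \<Rightarrow> real" where
  "iter_pd [] f = f"
| "iter_pd (i # is) f = pd i (iter_pd is f)"

definition smooth_on :: "(real^'n::finite) set \<Rightarrow> (real^'n \<Rightarrow> real) \<Rightarrow> bool" where
  "smooth_on S f \<longleftrightarrow> (\<forall>is. \<forall>x\<in>S. iter_pd is f differentiable (at x))"

definition grad :: "(real^'n::finite \<Rightarrow> real) \<Rightarrow> real^'n \<Rightarrow> real^'n" where
  "grad f x = (\<chi> i. pd i f x)"

definition lap :: "(real^'n::finite \<Rightarrow> real) \<Rightarrow> real^'n \<Rightarrow> real" where
  "lap f x = (\<Sum>i\<in>UNIV. pd i (pd i f) x)"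

definition pdx :: "'n::finite \<Rightarrow> (real^'n \<Rightarrow> real^'n \<Rightarrow> real) \<Rightarrow> real^'n \<Rightarrow> real^'n \<Rightarrow> real" where
  "pdx i w x y = deriv (\<lambda>t. w (x + t *\<^sub>R axis i 1) y) 0"

definition pdy :: "'n::finite \<Rightarrow> (real^'n \<Rightarrow> real^'n \<Rightarrow> real) \<Rightarrow> real^'n \<Rightarrow> real^'n \<Rightarrow> real" where
  "pdy i w x y = deriv (\<lambda>t. w x (y + t *\<^sub>R axis i 1)) 0"

definition Xc :: "'n::finite \<Rightarrow> real^'n \<Rightarrow> real^'n \<Rightarrow> real" where
  "Xc i x y = (y $ i - x $ i) / norm (y - x)"

definition Lop :: "(real^'n::finite \<Rightarrow> real^'n \<Rightarrow> real) \<Rightarrow> real^'n \<Rightarrow> real^'n \<Rightarrow> real" where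
  "Lop w x y =
     (\<Sum>i\<in>UNIV. pdx i (pdx i w) x y) + (\<Sum>i\<in>UNIV. pdy i (pdy i w) x y)
     + 2 * (\<Sum>i\<in>UNIV. pdx i (pdy i w) x y)
     - 4 * (\<Sum>i\<in>UNIV. \<Sum>j\<in>UNIV. Xc i x y * Xc j x y * pdx i (pdy j w) x y)"

end

theory Submission
  imports Defs
begin

(* Write u_k(b) = b_k/|b|, so that the function acted on by L is
     W(x,y) = \<Sum>_k (P_k(y) - P_k(x)) u_k(y - x)   with   P_k = \<partial>_k v.
   Every derivative occurring in L differentiates along a line (x,y) + t (c1 e_i, c2 e_i);
   by the product and chain rules the second derivatives of W are explicit sums involving
   P_k, its first and second partials, and the first and second partials of u_k.
   Since u_k is homogeneous of degree 0, Euler's relations  \<Sum>_i b_i \<partial>_i u_k = 0  and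
   \<Sum>_{i,j} b_i b_j \<partial>_i \<partial>_j u_k = 0 hold; they kill the whole term with the coefficients
   X_i X_j, and in  \<Delta>_x + \<Delta>_y + 2 \<Sum>_i \<partial>_{x_i} \<partial>_{y_i}  all terms with derivatives of u_k
   cancel, leaving  \<Sum>_k (\<Delta>P_k(y) - \<Delta>P_k(x)) u_k(y - x).  Finally \<Delta>P_k = \<partial>_k \<Delta>v by the
   symmetry of second partial derivatives (Schwarz). *)

section \<open>Partial derivatives along coordinate lines\<close>

lemma line_has_derivative:
  fixes f :: "real^'n::finite \<Rightarrow> real"
  assumes D: "(f has_derivative D) (at (z + (c*t0) *\<^sub>R axis i 1))"
  shows "((\<lambda>t. f (z + (c*t) *\<^sub>R axis i 1)) has_real_derivative c * D (axis i 1)) (at t0)"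
proof -
  have l: "((\<lambda>t. z + (c*t) *\<^sub>R axis i 1) has_derivative (\<lambda>h. (c*h) *\<^sub>R axis i 1)) (at t0)"
    by (auto intro!: derivative_eq_intros)
  have "((\<lambda>t. f (z + (c*t) *\<^sub>R axis i 1)) has_derivative (\<lambda>h. D ((c*h) *\<^sub>R axis i 1))) (at t0)"
    using has_derivative_compose[OF l D] by (simp add: o_def)
  moreover have "linear D" using has_derivative_bounded_linear[OF D] bounded_linear.linear by blast
  then have "(\<lambda>h. D ((c*h) *\<^sub>R axis i 1)) = (*) (c * D (axis i 1))"
    by (intro ext) (simp add: linear.scaleR)
  ultimately show ?thesis unfolding has_field_derivative_def by simp
qed

lemma pd_eq_derivative:
  fixes f :: "real^'n::finite \<Rightarrow> real"
  assumes D: "(f has_derivative D) (at q)"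
  shows "pd i f q = D (axis i 1)"
proof -
  have "((\<lambda>t. f (q + (1*t) *\<^sub>R axis i 1)) has_real_derivative 1 * D (axis i 1)) (at 0)"
    by (rule line_has_derivative) (use D in simp)
  then show ?thesis unfolding pd_def by (simp add: DERIV_imp_deriv)
qed

lemma line_has_pd:
  fixes f :: "real^'n::finite \<Rightarrow> real"
  assumes "f differentiable (at (z + (c*t0) *\<^sub>R axis i 1))"
  shows "((\<lambda>t. f (z + (c*t) *\<^sub>R axis i 1)) has_real_derivative c * pd i f (z + (c*t0) *\<^sub>R axis i 1)) (at t0)"
proof -
  obtain D where D: "(f has_derivative D) (at (z + (c*t0) *\<^sub>R axis i 1))"
    using assms unfolding differentiable_def by blast
  show ?thesis using line_has_derivative[OF D] pd_eq_derivative[OF D] by simp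
qed

text \<open>Special cases of the previous lemma in the shapes needed for the derivative rule sets:
  unit speed, and evaluation at t = 0 with the value of the derivative left open.\<close>
lemma line_has_pd_unit:
  fixes f :: "real^'n::finite \<Rightarrow> real"
  assumes "f differentiable (at (z + t0 *\<^sub>R axis i 1))"
  shows "((\<lambda>t. f (z + t *\<^sub>R axis i 1)) has_real_derivative pd i f (z + t0 *\<^sub>R axis i 1)) (at t0)"
  using line_has_pd[of f z 1 t0 i] assms by simp

lemma line_has_pd_at0:
  fixes f :: "real^'n::finite \<Rightarrow> real"
  shows "f differentiable (at z) \<Longrightarrow> D = c * pd i f z
    \<Longrightarrow> ((\<lambda>t. f (z + (c*t) *\<^sub>R axis i 1)) has_real_derivative D) (at 0)"
  using line_has_pd[of f z c 0 i] by simp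

lemma line_has_pd_unit_at0:
  fixes f :: "real^'n::finite \<Rightarrow> real"
  shows "f differentiable (at z) \<Longrightarrow> D = pd i f z
    \<Longrightarrow> ((\<lambda>t. f (z + t *\<^sub>R axis i 1)) has_real_derivative D) (at 0)"
  using line_has_pd_unit[of f z 0 i] by simp

lemma open_line_preimage:
  fixes S :: "(real^'n::finite) set"
  assumes "open S"
  shows "open {t::real. z + (c*t) *\<^sub>R axis i 1 \<in> S}"
proof -
  have "{t::real. z + (c*t) *\<^sub>R axis i 1 \<in> S} = (\<lambda>t. z + (c*t) *\<^sub>R axis i 1) -` S" by auto
  moreover have "open ((\<lambda>t::real. z + (c*t) *\<^sub>R axis i 1) -` S)"
    by (rule continuous_open_vimage[OF assms]) (intro continuous_intros)
  ultimately show ?thesis by simp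
qed

lemma pd_cong:
  fixes f g :: "real^'n::finite \<Rightarrow> real"
  assumes "open S" "z \<in> S" "\<And>q. q \<in> S \<Longrightarrow> f q = g q"
  shows "pd i f z = pd i g z"
  unfolding pd_def
proof (rule deriv_cong_ev[OF _ refl])
  show "\<forall>\<^sub>F t in nhds 0. f (z + t *\<^sub>R axis i 1) = g (z + t *\<^sub>R axis i 1)"
    unfolding eventually_nhds using open_line_preimage[OF assms(1), of z 1 i] assms(2,3)
    by (intro exI[of _ "{t::real. z + (1*t) *\<^sub>R axis i 1 \<in> S}"]) auto
qed

lemma pd_sum:
  fixes f :: "'i::finite \<Rightarrow> real^'n::finite \<Rightarrow> real"
  assumes "\<And>i. f i differentiable (at q)"
  shows "pd k (\<lambda>z. \<Sum>i\<in>UNIV. f i z) q = (\<Sum>i\<in>UNIV. pd k (f i) q)"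
proof -
  have "((\<lambda>t. \<Sum>i\<in>UNIV. f i (q + t *\<^sub>R axis k 1)) has_real_derivative (\<Sum>i\<in>UNIV. pd k (f i) q)) (at 0)"
    by (intro DERIV_sum line_has_pd_unit_at0 assms refl)
  then show ?thesis unfolding pd_def[of k "\<lambda>z. \<Sum>i\<in>UNIV. f i z"] by (rule DERIV_imp_deriv)
qed

section \<open>Symmetry of second partial derivatives\<close>

lemma mixed_difference_mvt:
  fixes f :: "real^'n::finite \<Rightarrow> real"
  assumes S: "ball z \<delta> \<subseteq> S" and h: "0 < h" "2*h < \<delta>"
    and df: "\<And>q. q\<in>S \<Longrightarrow> f differentiable (at q) \<and> pd i f differentiable (at q)"
  shows "\<exists>p\<in>ball z \<delta>. f (z + h *\<^sub>R axis i 1 + h *\<^sub>R axis j 1) - f (z + h *\<^sub>R axis i 1)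
           - f (z + h *\<^sub>R axis j 1) + f z = h^2 * pd j (pd i f) p"
proof -
  define e where "e = (axis i 1 :: real^'n)"
  define d where "d = (axis j 1 :: real^'n)"
  have square_in_S: "z + a *\<^sub>R e + b *\<^sub>R d \<in> ball z \<delta>"
    if "0 \<le> a" "a \<le> h" "0 \<le> b" "b \<le> h" for a b
  proof -
    have "norm (a *\<^sub>R e + b *\<^sub>R d) \<le> \<bar>a\<bar> + \<bar>b\<bar>"
      using norm_triangle_ineq[of "a *\<^sub>R e" "b *\<^sub>R d"] by (simp add: e_def d_def)
    moreover have "dist z (z + a *\<^sub>R e + b *\<^sub>R d) = norm (a *\<^sub>R e + b *\<^sub>R d)"
      by (simp only: dist_norm norm_minus_commute[of z]) (simp add: add.assoc)
    ultimately show ?thesis using that h by simp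
  qed
  text \<open>First the mean value theorem in direction e for the difference in direction d \<dots>\<close>
  define g where "g s = f (z + h *\<^sub>R d + s *\<^sub>R e) - f (z + s *\<^sub>R e)" for s
  have dg: "DERIV g s :> pd i f (z + h *\<^sub>R d + s *\<^sub>R e) - pd i f (z + s *\<^sub>R e)"
    if "0 \<le> s" "s \<le> h" for s
    unfolding g_def e_def
  proof (intro DERIV_diff line_has_pd_unit)
    show "f differentiable at (z + h *\<^sub>R d + s *\<^sub>R axis i 1)"
      using df S square_in_S[of s h] that h by (auto simp: e_def add_ac)
    show "f differentiable at (z + s *\<^sub>R axis i 1)"
      using df S square_in_S[of s 0] that h by (auto simp: e_def add_ac)
  qed
  obtain \<xi> where xi: "0 < \<xi>" "\<xi> < h"
    "g h - g 0 = (h - 0) * (pd i f (z + h *\<^sub>R d + \<xi> *\<^sub>R e) - pd i f (z + \<xi> *\<^sub>R e))"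
    using MVT2[OF h(1) dg] by auto
  text \<open>\<dots> then in direction d for the resulting difference of pd i f.\<close>
  define \<phi> where "\<phi> t = pd i f (z + \<xi> *\<^sub>R e + t *\<^sub>R d)" for t
  have dphi: "DERIV \<phi> t :> pd j (pd i f) (z + \<xi> *\<^sub>R e + t *\<^sub>R d)" if "0 \<le> t" "t \<le> h" for t
    unfolding \<phi>_def d_def
    by (rule line_has_pd_unit) (use df S square_in_S[of \<xi> t] that xi in \<open>auto simp: d_def\<close>)
  obtain \<eta> where eta: "0 < \<eta>" "\<eta> < h"
    "\<phi> h - \<phi> 0 = (h - 0) * pd j (pd i f) (z + \<xi> *\<^sub>R e + \<eta> *\<^sub>R d)"
    using MVT2[OF h(1) dphi] by auto
  have "f (z + h *\<^sub>R axis i 1 + h *\<^sub>R axis j 1) - f (z + h *\<^sub>R axis i 1)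
           - f (z + h *\<^sub>R axis j 1) + f z = g h - g 0"
    unfolding g_def e_def d_def by (simp add: add_ac)
  also have "\<dots> = h * (\<phi> h - \<phi> 0)" using xi(3) unfolding \<phi>_def by (simp add: add_ac)
  also have "\<dots> = h^2 * pd j (pd i f) (z + \<xi> *\<^sub>R e + \<eta> *\<^sub>R d)"
    using eta(3) by (simp add: power2_eq_square)
  finally show ?thesis using square_in_S[of \<xi> \<eta>] xi eta by (intro bexI) auto
qed

text \<open>Both are limits of the same second differences divided by h^2.\<close>
lemma pd_commute:
  fixes f :: "real^'n::finite \<Rightarrow> real"
  assumes S: "open S" "z \<in> S"
    and df: "\<And>q. q\<in>S \<Longrightarrow> f differentiable (at q) \<and> pd i f differentiable (at q) \<and> pd j f differentiable (at q)"
    and c1: "pd j (pd i f) differentiable (at z)" and c2: "pd i (pd j f) differentiable (at z)"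
  shows "pd j (pd i f) z = pd i (pd j f) z"
proof (rule ccontr)
  define A where "A = pd j (pd i f) z"
  define B where "B = pd i (pd j f) z"
  assume "pd j (pd i f) z \<noteq> pd i (pd j f) z"
  then have "A \<noteq> B" by (simp add: A_def B_def)
  define \<epsilon> where "\<epsilon> = \<bar>A - B\<bar> / 2"
  have ep: "\<epsilon> > 0" using \<open>A \<noteq> B\<close> by (simp add: \<epsilon>_def)
  obtain d1 where d1: "d1 > 0" "\<And>q. dist q z < d1 \<Longrightarrow> dist (pd j (pd i f) q) A < \<epsilon>"
    using differentiable_imp_continuous_within[OF c1] ep unfolding continuous_at_eps_delta A_def by blast
  obtain d2 where d2: "d2 > 0" "\<And>q. dist q z < d2 \<Longrightarrow> dist (pd i (pd j f) q) B < \<epsilon>"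
    using differentiable_imp_continuous_within[OF c2] ep unfolding continuous_at_eps_delta B_def by blast
  obtain d3 where d3: "d3 > 0" "ball z d3 \<subseteq> S" using S openE by blast
  define \<delta> where "\<delta> = min d1 (min d2 d3)"
  define h where "h = \<delta> / 3"
  have h: "0 < h" "2*h < \<delta>" using d1 d2 d3 by (auto simp: h_def \<delta>_def)
  have bS: "ball z \<delta> \<subseteq> S" using d3 by (auto simp: \<delta>_def)
  obtain p where p: "p \<in> ball z \<delta>" "f (z + h *\<^sub>R axis i 1 + h *\<^sub>R axis j 1) - f (z + h *\<^sub>R axis i 1)
           - f (z + h *\<^sub>R axis j 1) + f z = h^2 * pd j (pd i f) p"
    using mixed_difference_mvt[OF bS h, of f i j] df by blast
  obtain q where q: "q \<in> ball z \<delta>" "f (z + h *\<^sub>R axis j 1 + h *\<^sub>R axis i 1) - f (z + h *\<^sub>R axis j 1)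
           - f (z + h *\<^sub>R axis i 1) + f z = h^2 * pd i (pd j f) q"
    using mixed_difference_mvt[OF bS h, of f j i] df by blast
  have "z + h *\<^sub>R axis j 1 + h *\<^sub>R axis i 1 = z + h *\<^sub>R axis i 1 + h *\<^sub>R axis j 1"
    by (simp add: add_ac)
  then have "h^2 * pd j (pd i f) p = h^2 * pd i (pd j f) q" using p(2) q(2) by (simp only:)
  then have eq: "pd j (pd i f) p = pd i (pd j f) q" using h by simp
  have "dist p z < d1" "dist q z < d2" using p(1) q(1) by (auto simp: \<delta>_def dist_commute)
  then have "\<bar>pd j (pd i f) p - A\<bar> < \<epsilon>" "\<bar>pd i (pd j f) q - B\<bar> < \<epsilon>"
    using d1(2) d2(2) by (auto simp: dist_real_def)
  then have "\<bar>A - B\<bar> < 2 * \<epsilon>" using eq by linarith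
  then show False by (simp add: \<epsilon>_def)
qed

text \<open>Iterated partial derivatives apply the innermost (last) index first.\<close>
lemma iter_pd_append: "iter_pd (is @ [i]) f = iter_pd is (pd i f)"
  by (induction "is") simp_all

lemma smooth_on_pd: "smooth_on S f \<Longrightarrow> smooth_on S (pd i f)"
  unfolding smooth_on_def by (auto simp flip: iter_pd_append)

lemma smooth_pd_commute:
  assumes "open S" "smooth_on S f" "z \<in> S"
  shows "pd j (pd i f) z = pd i (pd j f) z"
proof (rule pd_commute[OF assms(1,3)])
  have D: "\<And>is q. q \<in> S \<Longrightarrow> iter_pd is f differentiable (at q)"
    using assms(2) unfolding smooth_on_def by blast
  show "\<And>q. q \<in> S \<Longrightarrow> f differentiable (at q) \<and> pd i f differentiable (at q) \<and> pd j f differentiable (at q)"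
    using D[of _ "[]"] D[of _ "[i]"] D[of _ "[j]"] by simp
  show "pd j (pd i f) differentiable (at z)" "pd i (pd j f) differentiable (at z)"
    using D[OF assms(3), of "[j,i]"] D[OF assms(3), of "[i,j]"] by simp_all
qed

lemma pd_lap:
  assumes S: "open S" "smooth_on S v" and z: "z \<in> S"
  shows "pd k (lap v) z = (\<Sum>i\<in>UNIV. pd i (pd i (pd k v)) z)"
proof -
  have "lap v = (\<lambda>z. \<Sum>i\<in>UNIV. pd i (pd i v) z)" by (intro ext) (simp add: lap_def)
  moreover have "pd i (pd i v) differentiable (at z)" for i
    using S(2) z unfolding smooth_on_def by (metis iter_pd.simps)
  ultimately have "pd k (lap v) z = (\<Sum>i\<in>UNIV. pd k (pd i (pd i v)) z)"
    by (simp add: pd_sum)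
  also have "\<dots> = (\<Sum>i\<in>UNIV. pd i (pd k (pd i v)) z)"
    by (intro sum.cong refl smooth_pd_commute[OF S(1) _ z] smooth_on_pd S(2))
  also have "\<dots> = (\<Sum>i\<in>UNIV. pd i (pd i (pd k v)) z)"
    by (intro sum.cong refl pd_cong[OF S(1) z] smooth_pd_commute[OF S(1) S(2)])
  finally show ?thesis .
qed

section \<open>Derivatives of a pairing of differences with a function of y - x\<close>

definition pd_pair :: "real \<Rightarrow> real \<Rightarrow> 'n::finite \<Rightarrow> (real^'n \<Rightarrow> real^'n \<Rightarrow> real) \<Rightarrow> real^'n \<Rightarrow> real^'n \<Rightarrow> real" where
  "pd_pair c1 c2 i w x y = deriv (\<lambda>t. w (x + (c1*t) *\<^sub>R axis i 1) (y + (c2*t) *\<^sub>R axis i 1)) 0"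

lemma pdx_eq_pd_pair: "pdx i w = pd_pair 1 0 i w"
  by (intro ext) (simp add: pdx_def pd_pair_def)

lemma pdy_eq_pd_pair: "pdy i w = pd_pair 0 1 i w"
  by (intro ext) (simp add: pdy_def pd_pair_def)

text \<open>The function on which L acts in the theorem, with P k = pd k v and \<gamma> k b = b_k / |b|.\<close>
definition diff_pairing :: "('n::finite \<Rightarrow> real^'n \<Rightarrow> real) \<Rightarrow> ('n \<Rightarrow> real^'n \<Rightarrow> real) \<Rightarrow> real^'n \<Rightarrow> real^'n \<Rightarrow> real" where
  "diff_pairing P \<gamma> x y = (\<Sum>k\<in>UNIV. (P k y - P k x) * \<gamma> k (y - x))"

lemma diff_along_line:
  fixes x y e :: "real^'n::finite"
  shows "(y + (c2*t) *\<^sub>R e) - (x + (c1*t) *\<^sub>R e) = (y - x) + ((c2 - c1)*t) *\<^sub>R e"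
  by (simp add: algebra_simps)

text \<open>Factorisation of the double sums arising from the mixed term
  \<Sum>_{i,j} X_i X_j \<partial>_{x_i} \<partial>_{y_j} of L.\<close>
lemma double_sum_factor:
  fixes X g p q :: "'a \<Rightarrow> real" and h :: "'a \<Rightarrow> 'a \<Rightarrow> real"
  shows "(\<Sum>i\<in>A. \<Sum>j\<in>A. X i * X j * (- p j * g i - q i * g j - c * h j i))
    = - ((\<Sum>i\<in>A. X i * g i) * (\<Sum>j\<in>A. X j * p j)) - (\<Sum>i\<in>A. X i * q i) * (\<Sum>j\<in>A. X j * g j)
      - c * (\<Sum>i\<in>A. \<Sum>j\<in>A. X i * X j * h j i)"
proof -
  have "(\<Sum>i\<in>A. \<Sum>j\<in>A. X i * X j * (- p j * g i - q i * g j - c * h j i))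
     = (\<Sum>i\<in>A. \<Sum>j\<in>A. - (X i * g i * (X j * p j)) - X i * q i * (X j * g j) - c * (X i * X j * h j i))"
    by (intro sum.cong refl) (simp add: algebra_simps)
  also have "\<dots> = - (\<Sum>i\<in>A. \<Sum>j\<in>A. X i * g i * (X j * p j)) - (\<Sum>i\<in>A. \<Sum>j\<in>A. X i * q i * (X j * g j))
      - c * (\<Sum>i\<in>A. \<Sum>j\<in>A. X i * X j * h j i)"
    by (simp add: sum_subtractf sum_negf sum_distrib_left[of c])
  also have "\<dots> = - ((\<Sum>i\<in>A. X i * g i) * (\<Sum>j\<in>A. X j * p j)) - (\<Sum>i\<in>A. X i * q i) * (\<Sum>j\<in>A. X j * g j)
      - c * (\<Sum>i\<in>A. \<Sum>j\<in>A. X i * X j * h j i)"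
    by (simp only: sum_product)
  finally show ?thesis .
qed

context
  fixes \<Omega> :: "(real^'n::finite) set" and P \<gamma> :: "'n \<Rightarrow> real^'n \<Rightarrow> real"
    and \<delta> :: "'n \<Rightarrow> 'n \<Rightarrow> real^'n \<Rightarrow> real"
  assumes open_\<Omega>: "open \<Omega>"
    and P_diff: "\<And>k q. q \<in> \<Omega> \<Longrightarrow> P k differentiable (at q)"
    and pd_P_diff: "\<And>k j q. q \<in> \<Omega> \<Longrightarrow> pd j (P k) differentiable (at q)"
    and \<gamma>_diff: "\<And>k b. b \<noteq> 0 \<Longrightarrow> \<gamma> k differentiable (at b)"
    and pd_\<gamma>: "\<And>k j b. b \<noteq> 0 \<Longrightarrow> pd j (\<gamma> k) b = \<delta> k j b"
    and \<delta>_diff: "\<And>k j b. b \<noteq> 0 \<Longrightarrow> \<delta> k j differentiable (at b)"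
begin

lemma pd_pair_diff_pairing:
  assumes x: "x \<in> \<Omega>" and y: "y \<in> \<Omega>" and xy: "x \<noteq> y"
  shows "pd_pair c1 c2 i (diff_pairing P \<gamma>) x y =
    (\<Sum>k\<in>UNIV. (c2 * pd i (P k) y - c1 * pd i (P k) x) * \<gamma> k (y - x)
       + (c2 - c1) * (P k y - P k x) * \<delta> k i (y - x))"
proof -
  have yx: "y - x \<noteq> 0" using xy by simp
  have "(\<lambda>t. diff_pairing P \<gamma> (x + (c1*t) *\<^sub>R axis i 1) (y + (c2*t) *\<^sub>R axis i 1))
     = (\<lambda>t. \<Sum>k\<in>UNIV. (P k (y + (c2*t) *\<^sub>R axis i 1) - P k (x + (c1*t) *\<^sub>R axis i 1))
              * \<gamma> k ((y - x) + ((c2-c1)*t) *\<^sub>R axis i 1))"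
    by (simp only: diff_pairing_def diff_along_line)
  moreover have "((\<lambda>t. \<Sum>k\<in>UNIV. (P k (y + (c2*t) *\<^sub>R axis i 1) - P k (x + (c1*t) *\<^sub>R axis i 1))
              * \<gamma> k ((y - x) + ((c2-c1)*t) *\<^sub>R axis i 1))
      has_real_derivative (\<Sum>k\<in>UNIV. (c2 * pd i (P k) y - c1 * pd i (P k) x) * \<gamma> k (y - x)
        + (c2 - c1) * (P k y - P k x) * \<delta> k i (y - x))) (at 0)"
    by (rule derivative_eq_intros line_has_pd_at0 P_diff \<gamma>_diff x y yx refl
        | simp add: pd_\<gamma>[OF yx] algebra_simps)+
  ultimately show ?thesis unfolding pd_pair_def by (simp add: DERIV_imp_deriv)
qed

text \<open>Second derivatives: differentiate the formula of the previous lemma once more along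
  (ca e_i, cb e_i); it is valid on an open set of parameters t around 0.\<close>
lemma pd_pair2_diff_pairing:
  assumes x: "x \<in> \<Omega>" and y: "y \<in> \<Omega>" and xy: "x \<noteq> y"
  shows "pd_pair ca cb i (pd_pair da db j (diff_pairing P \<gamma>)) x y =
    (\<Sum>k\<in>UNIV. (db*cb * pd i (pd j (P k)) y - da*ca * pd i (pd j (P k)) x) * \<gamma> k (y-x)
       + (cb-ca) * (db * pd j (P k) y - da * pd j (P k) x) * \<delta> k i (y-x)
       + (db - da) * (cb * pd i (P k) y - ca * pd i (P k) x) * \<delta> k j (y-x)
       + (db-da)*(cb-ca)*(P k y - P k x) * pd i (\<delta> k j) (y-x))"
    (is "_ = ?D")
proof -
  have yx: "y - x \<noteq> 0" using xy by simp
  define T where "T = {t. x + (ca*t) *\<^sub>R axis i 1 \<in> \<Omega>} \<inter> {t. y + (cb*t) *\<^sub>R axis i 1 \<in> \<Omega>}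
     \<inter> {t. (y - x) + ((cb-ca)*t) *\<^sub>R axis i 1 \<in> -{0}}"
  have "open T" unfolding T_def
    by (intro open_Int open_line_preimage open_\<Omega> open_Compl closed_singleton)
  have "0 \<in> T" unfolding T_def using x y yx by simp
  define E where "E t = (\<Sum>k\<in>UNIV.
       (db * pd j (P k) (y + (cb*t) *\<^sub>R axis i 1) - da * pd j (P k) (x + (ca*t) *\<^sub>R axis i 1))
         * \<gamma> k ((y - x) + ((cb-ca)*t) *\<^sub>R axis i 1)
       + (db - da) * (P k (y + (cb*t) *\<^sub>R axis i 1) - P k (x + (ca*t) *\<^sub>R axis i 1))
         * \<delta> k j ((y - x) + ((cb-ca)*t) *\<^sub>R axis i 1))" for t
  have E_eq: "E t = pd_pair da db j (diff_pairing P \<gamma>) (x + (ca*t) *\<^sub>R axis i 1) (y + (cb*t) *\<^sub>R axis i 1)"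
    if "t \<in> T" for t
  proof -
    have in_\<Omega>: "x + (ca*t) *\<^sub>R axis i 1 \<in> \<Omega>" "y + (cb*t) *\<^sub>R axis i 1 \<in> \<Omega>"
      and "(y - x) + ((cb-ca)*t) *\<^sub>R axis i 1 \<noteq> 0" using that unfolding T_def by auto
    then have ne: "x + (ca*t) *\<^sub>R axis i 1 \<noteq> y + (cb*t) *\<^sub>R axis i 1"
      by (metis diff_along_line right_minus_eq)
    show ?thesis unfolding pd_pair_diff_pairing[OF in_\<Omega> ne] E_def diff_along_line ..
  qed
  have "(E has_real_derivative ?D) (at 0)"
    unfolding E_def
    by (rule derivative_eq_intros line_has_pd_at0 P_diff pd_P_diff \<gamma>_diff \<delta>_diff x y yx refl
        | simp add: pd_\<gamma>[OF yx] algebra_simps)+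
  then have "((\<lambda>t. pd_pair da db j (diff_pairing P \<gamma>) (x + (ca*t) *\<^sub>R axis i 1) (y + (cb*t) *\<^sub>R axis i 1))
    has_real_derivative ?D) (at 0)"
    by (rule has_field_derivative_transform_within_open[OF _ \<open>open T\<close> \<open>0 \<in> T\<close>]) (rule E_eq)
  then show ?thesis unfolding pd_pair_def[of ca cb i] by (rule DERIV_imp_deriv)
qed

text \<open>In \<Delta>_x + \<Delta>_y + 2 \<Sum>_i \<partial>_{x_i} \<partial>_{y_i} all terms containing derivatives of \<gamma> cancel.\<close>
lemma pure_terms_diff_pairing:
  assumes x: "x \<in> \<Omega>" and y: "y \<in> \<Omega>" and xy: "x \<noteq> y"
  shows "pd_pair 1 0 i (pd_pair 1 0 i (diff_pairing P \<gamma>)) x y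
       + pd_pair 0 1 i (pd_pair 0 1 i (diff_pairing P \<gamma>)) x y
       + 2 * pd_pair 1 0 i (pd_pair 0 1 i (diff_pairing P \<gamma>)) x y
     = (\<Sum>k\<in>UNIV. (pd i (pd i (P k)) y - pd i (pd i (P k)) x) * \<gamma> k (y - x))"
  unfolding pd_pair2_diff_pairing[OF x y xy]
  by (simp add: sum.distrib[symmetric] sum_distrib_left algebra_simps)

lemma mixed_terms_diff_pairing:
  assumes x: "x \<in> \<Omega>" and y: "y \<in> \<Omega>" and xy: "x \<noteq> y"
    and euler1: "\<And>k. (\<Sum>i\<in>UNIV. (y - x) $ i * \<delta> k i (y - x)) = 0"
    and euler2: "\<And>k. (\<Sum>i\<in>UNIV. \<Sum>j\<in>UNIV. (y - x) $ i * (y - x) $ j * pd i (\<delta> k j) (y - x)) = 0"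
  shows "(\<Sum>i\<in>UNIV. \<Sum>j\<in>UNIV. Xc i x y * Xc j x y * pd_pair 1 0 i (pd_pair 0 1 j (diff_pairing P \<gamma>)) x y) = 0"
proof -
  define X where "X i = Xc i x y" for i
  define M where "M k i j = - pd j (P k) y * \<delta> k i (y - x) - pd i (P k) x * \<delta> k j (y - x)
      - (P k y - P k x) * pd i (\<delta> k j) (y - x)" for k i j
  have mixed: "pd_pair 1 0 i (pd_pair 0 1 j (diff_pairing P \<gamma>)) x y = (\<Sum>k\<in>UNIV. M k i j)" for i j
    unfolding pd_pair2_diff_pairing[OF x y xy] M_def by (intro sum.cong refl) (simp add: algebra_simps)
  have X_euler1: "(\<Sum>i\<in>UNIV. X i * \<delta> k i (y - x)) = 0" for k
    using euler1[of k] by (simp add: X_def Xc_def sum_divide_distrib[symmetric])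
  have X_euler2: "(\<Sum>i\<in>UNIV. \<Sum>j\<in>UNIV. X i * X j * pd i (\<delta> k j) (y - x)) = 0" for k
  proof -
    have "(\<Sum>i\<in>UNIV. \<Sum>j\<in>UNIV. X i * X j * pd i (\<delta> k j) (y - x))
       = (\<Sum>i\<in>UNIV. \<Sum>j\<in>UNIV. (y - x) $ i * (y - x) $ j * pd i (\<delta> k j) (y - x)) / (norm (y - x))^2"
      unfolding X_def Xc_def by (simp add: sum_divide_distrib power2_eq_square)
    then show ?thesis using euler2 by simp
  qed
  have M_vanish: "(\<Sum>i\<in>UNIV. \<Sum>j\<in>UNIV. X i * X j * M k i j) = 0" for k
    unfolding M_def double_sum_factor X_euler1 X_euler2 by simp
  have "(\<Sum>i\<in>UNIV. \<Sum>j\<in>UNIV. X i * X j * (\<Sum>k\<in>UNIV. M k i j))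
      = (\<Sum>i\<in>UNIV. \<Sum>j\<in>UNIV. \<Sum>k\<in>UNIV. X i * X j * M k i j)"
    by (simp add: sum_distrib_left)
  also have "\<dots> = (\<Sum>i\<in>UNIV. \<Sum>k\<in>UNIV. \<Sum>j\<in>UNIV. X i * X j * M k i j)"
    by (intro sum.cong refl sum.swap)
  also have "\<dots> = (\<Sum>k\<in>UNIV. \<Sum>i\<in>UNIV. \<Sum>j\<in>UNIV. X i * X j * M k i j)"
    by (rule sum.swap)
  also have "\<dots> = 0" by (simp add: M_vanish)
  finally show ?thesis unfolding X_def mixed .
qed

lemma Lop_diff_pairing:
  assumes x: "x \<in> \<Omega>" and y: "y \<in> \<Omega>" and xy: "x \<noteq> y"
    and euler1: "\<And>k. (\<Sum>i\<in>UNIV. (y - x) $ i * \<delta> k i (y - x)) = 0"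
    and euler2: "\<And>k. (\<Sum>i\<in>UNIV. \<Sum>j\<in>UNIV. (y - x) $ i * (y - x) $ j * pd i (\<delta> k j) (y - x)) = 0"
  shows "Lop (diff_pairing P \<gamma>) x y
    = (\<Sum>k\<in>UNIV. ((\<Sum>i\<in>UNIV. pd i (pd i (P k)) y) - (\<Sum>i\<in>UNIV. pd i (pd i (P k)) x)) * \<gamma> k (y - x))"
proof -
  have "Lop (diff_pairing P \<gamma>) x y
      = (\<Sum>i\<in>UNIV. pd_pair 1 0 i (pd_pair 1 0 i (diff_pairing P \<gamma>)) x y
           + pd_pair 0 1 i (pd_pair 0 1 i (diff_pairing P \<gamma>)) x y
           + 2 * pd_pair 1 0 i (pd_pair 0 1 i (diff_pairing P \<gamma>)) x y)
      - 4 * (\<Sum>i\<in>UNIV. \<Sum>j\<in>UNIV. Xc i x y * Xc j x y * pd_pair 1 0 i (pd_pair 0 1 j (diff_pairing P \<gamma>)) x y)"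
    unfolding Lop_def pdx_eq_pd_pair pdy_eq_pd_pair by (simp add: sum.distrib sum_distrib_left)
  also have "\<dots> = (\<Sum>i\<in>UNIV. \<Sum>k\<in>UNIV. (pd i (pd i (P k)) y - pd i (pd i (P k)) x) * \<gamma> k (y - x))"
    unfolding pure_terms_diff_pairing[OF x y xy] mixed_terms_diff_pairing[OF x y xy euler1 euler2]
    by simp
  also have "\<dots> = (\<Sum>k\<in>UNIV. ((\<Sum>i\<in>UNIV. pd i (pd i (P k)) y) - (\<Sum>i\<in>UNIV. pd i (pd i (P k)) x)) * \<gamma> k (y - x))"
    by (subst sum.swap) (simp add: sum_subtractf[symmetric] sum_distrib_right)
  finally show ?thesis .
qed

end


section \<open>The components of the unit vector b / |b| and Euler's relations\<close>

lemma differentiable_vec_nth: "(\<lambda>v::real^'n::finite. v $ k) differentiable (at b)"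
  using bounded_linear_imp_differentiable[OF bounded_linear_vec_nth] .

lemma pd_norm:
  fixes b :: "real^'n::finite"
  assumes "b \<noteq> 0"
  shows "pd i norm b = b $ i / norm b"
  using pd_eq_derivative[OF has_derivative_norm[OF assms], of i]
  by (simp add: inner_axis' sgn_div_norm divide_inverse mult.commute)

lemma pd_vec_nth: "pd i (\<lambda>v::real^'n::finite. v $ k) b = (if k = i then 1 else 0)"
proof -
  have "((\<lambda>v::real^'n. v $ k) has_derivative (\<lambda>v. v $ k)) (at b)"
    by (rule bounded_linear_imp_has_derivative[OF bounded_linear_vec_nth])
  from pd_eq_derivative[OF this] show ?thesis by (simp add: axis_def)
qed

definition unit_comp :: "'n::finite \<Rightarrow> real^'n \<Rightarrow> real" where
  "unit_comp k b = (1 / norm b) * b $ k"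

definition unit_comp_d :: "'n::finite \<Rightarrow> 'n \<Rightarrow> real^'n \<Rightarrow> real" where
  "unit_comp_d k j b = (if j = k then 1 else 0) / norm b - b $ k * b $ j / norm b ^ 3"

definition unit_comp_dd :: "'n::finite \<Rightarrow> 'n \<Rightarrow> 'n \<Rightarrow> real^'n \<Rightarrow> real" where
  "unit_comp_dd k j i b = - (if j = k then 1 else 0) * b $ i / norm b ^ 3
      - ((if i = k then 1 else 0) * b $ j + b $ k * (if i = j then 1 else 0)) / norm b ^ 3
      + 3 * b $ k * b $ j * b $ i / norm b ^ 5"

lemma unit_comp_differentiable: "b \<noteq> 0 \<Longrightarrow> unit_comp k differentiable (at b)"
  unfolding unit_comp_def by (intro derivative_intros differentiable_vec_nth) auto

lemma unit_comp_d_differentiable: "b \<noteq> 0 \<Longrightarrow> unit_comp_d k j differentiable (at b)"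
  unfolding unit_comp_d_def by (intro derivative_intros differentiable_vec_nth) auto

lemma pd_unit_comp:
  assumes "b \<noteq> 0"
  shows "pd j (unit_comp k) b = unit_comp_d k j b"
proof -
  have "((\<lambda>t. unit_comp k (b + t *\<^sub>R axis j 1)) has_real_derivative unit_comp_d k j b) (at 0)"
    unfolding unit_comp_def
    by (rule derivative_eq_intros line_has_pd_unit_at0 differentiable_vec_nth differentiable_norm_at assms refl
        | simp add: assms pd_norm pd_vec_nth unit_comp_d_def field_simps power2_eq_square power3_eq_cube)+
  then show ?thesis unfolding pd_def by (rule DERIV_imp_deriv)
qed

lemma pd_unit_comp_d:
  assumes "b \<noteq> 0"
  shows "pd i (unit_comp_d k j) b = unit_comp_dd k j i b"
proof -
  have "((\<lambda>t. unit_comp_d k j (b + t *\<^sub>R axis i 1)) has_real_derivative unit_comp_dd k j i b) (at 0)"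
    unfolding unit_comp_d_def
    by (rule derivative_eq_intros line_has_pd_unit_at0 differentiable_vec_nth differentiable_norm_at assms refl
        | simp add: assms pd_norm pd_vec_nth unit_comp_dd_def field_simps power2_eq_square power3_eq_cube
        | simp add: eval_nat_numeral field_simps)+
  then show ?thesis unfolding pd_def by (rule DERIV_imp_deriv)
qed

lemma norm_sq_sum: "norm (b::real^'n::finite) ^ 2 = (\<Sum>i\<in>UNIV. b $ i * b $ i)"
  by (simp add: power2_norm_eq_inner inner_vec_def)

text \<open>Euler's relation for the degree-0 homogeneous function u_k: b \<bullet> \<nabla>u_k(b) = 0.\<close>
lemma unit_comp_euler1:
  assumes "b \<noteq> 0"
  shows "(\<Sum>i\<in>UNIV. b $ i * unit_comp_d k i b) = 0"
proof -
  have "(\<Sum>i\<in>UNIV. b $ i * unit_comp_d k i b) = (\<Sum>i\<in>UNIV. b $ i * (if i = k then 1 else 0)) / norm b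
     - b $ k * (\<Sum>i\<in>UNIV. b $ i * b $ i) / norm b ^ 3"
    unfolding unit_comp_d_def
    by (simp add: right_diff_distrib sum_subtractf sum_divide_distrib sum_distrib_left mult.assoc mult.left_commute)
  also have "\<dots> = b $ k / norm b - b $ k * norm b ^ 2 / norm b ^ 3"
    by (simp add: norm_sq_sum if_distrib cong: if_cong)
  also have "\<dots> = 0" using assms by (simp add: power2_eq_square power3_eq_cube)
  finally show ?thesis .
qed

text \<open>Linearity of double sums, in the shape occurring in the next lemma.\<close>
lemma double_sum_split: "(\<Sum>i\<in>A. \<Sum>j\<in>B. - a i j / r - (b i j + c i j) / r + 3 * d i j / q)
   = - (\<Sum>i\<in>A. \<Sum>j\<in>B. a i j) / r - ((\<Sum>i\<in>A. \<Sum>j\<in>B. b i j) + (\<Sum>i\<in>A. \<Sum>j\<in>B. c i j)) / r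
     + 3 * (\<Sum>i\<in>A. \<Sum>j\<in>B. d i j) / (q::real)"
  by (simp add: sum.distrib sum_subtractf sum_divide_distrib sum_negf sum_distrib_left add_divide_distrib)

text \<open>The second-order Euler relation b^T (\<nabla>^2 u_k)(b) b = 0: with s = |b|^2 the four double sums
  equal b_k s, b_k s, b_k s and b_k s^2, which cancel.\<close>
lemma unit_comp_euler2:
  assumes "b \<noteq> 0"
  shows "(\<Sum>i\<in>UNIV. \<Sum>j\<in>UNIV. b $ i * b $ j * pd i (unit_comp_d k j) b) = 0"
proof -
  define s where "s = (\<Sum>i\<in>UNIV. b $ i * b $ i)"
  have s: "s = norm b ^ 2" unfolding s_def by (simp add: norm_sq_sum)
  have "(\<Sum>i\<in>UNIV. \<Sum>j\<in>UNIV. b $ i * b $ j * pd i (unit_comp_d k j) b)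
      = (\<Sum>i\<in>UNIV. \<Sum>j\<in>UNIV. - (if j = k then b $ i * b $ j * b $ i else 0) / norm b ^ 3
          - ((if i = k then b $ i * b $ j * b $ j else 0) + (if i = j then b $ i * b $ j * b $ k else 0)) / norm b ^ 3
          + 3 * (b $ k * (b $ j * b $ j) * (b $ i * b $ i)) / norm b ^ 5)"
    unfolding pd_unit_comp_d[OF assms] unit_comp_dd_def by (intro sum.cong refl) (simp add: field_simps)
  also have "\<dots> = - (\<Sum>i\<in>UNIV. \<Sum>j\<in>UNIV. (if j = k then b $ i * b $ j * b $ i else 0)) / norm b ^ 3
      - ((\<Sum>i\<in>UNIV. \<Sum>j\<in>UNIV. (if i = k then b $ i * b $ j * b $ j else 0))
         + (\<Sum>i\<in>UNIV. \<Sum>j\<in>UNIV. (if i = j then b $ i * b $ j * b $ k else 0))) / norm b ^ 3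
      + 3 * (\<Sum>i\<in>UNIV. \<Sum>j\<in>UNIV. b $ k * (b $ j * b $ j) * (b $ i * b $ i)) / norm b ^ 5"
    by (rule double_sum_split)
  also have "(\<Sum>i\<in>UNIV. \<Sum>j\<in>UNIV. (if j = k then b $ i * b $ j * b $ i else 0)) = b $ k * s"
    unfolding s_def by (simp add: sum_distrib_left mult_ac)
  also have "(\<Sum>i\<in>UNIV. \<Sum>j\<in>UNIV. (if i = k then b $ i * b $ j * b $ j else 0)) = b $ k * s"
  proof -
    have "(\<Sum>i\<in>UNIV. \<Sum>j\<in>UNIV. (if i = k then b $ i * b $ j * b $ j else 0))
        = (\<Sum>i\<in>UNIV. if i = k then (\<Sum>j\<in>UNIV. b $ i * b $ j * b $ j) else 0)"
      by (intro sum.cong refl) auto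
    then show ?thesis unfolding s_def by (simp add: sum_distrib_left mult_ac)
  qed
  also have "(\<Sum>i\<in>UNIV. \<Sum>j\<in>UNIV. (if i = j then b $ i * b $ j * b $ k else 0)) = b $ k * s"
  proof -
    have "(\<Sum>i\<in>UNIV. \<Sum>j\<in>UNIV. (if i = j then b $ i * b $ j * b $ k else 0))
        = (\<Sum>i\<in>UNIV. b $ i * b $ i * b $ k)"
      by (intro sum.cong refl) (simp add: if_distrib cong: if_cong)
    then show ?thesis unfolding s_def by (simp add: sum_distrib_left mult_ac)
  qed
  also have "(\<Sum>i\<in>UNIV. \<Sum>j\<in>UNIV. b $ k * (b $ j * b $ j) * (b $ i * b $ i)) = b $ k * s * s"
    unfolding s_def by (simp add: sum_distrib_left sum_distrib_right mult_ac)
  finally show ?thesis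
    using assms unfolding s by (simp add: field_simps power2_eq_square power3_eq_cube eval_nat_numeral)
qed

lemma grad_diff_dot_unit:
  "(grad w y - grad w x) \<bullet> ((1 / norm (y - x)) *\<^sub>R (y - x)) = diff_pairing (\<lambda>k. pd k w) unit_comp x y"
  by (simp add: diff_pairing_def inner_vec_def grad_def unit_comp_def mult_ac)

theorem lemma2p2:
  fixes \<Omega> :: "(real^'n::finite) set" and v :: "real^'n \<Rightarrow> real"
  assumes "open \<Omega>" and "smooth_on \<Omega> v"
    and "x \<in> \<Omega>" and "y \<in> \<Omega>" and "x \<noteq> y"
  shows "Lop (\<lambda>x y. (grad v y - grad v x) \<bullet> ((1 / norm (y - x)) *\<^sub>R (y - x))) x y
       = (grad (lap v) y - grad (lap v) x) \<bullet> ((1 / norm (y - x)) *\<^sub>R (y - x))"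
proof -
  define P where "P k = pd k v" for k
  have smooth_P: "smooth_on \<Omega> (P k)" for k
    unfolding P_def using assms(2) by (rule smooth_on_pd)
  have P_diff: "P k differentiable (at q)" "pd j (P k) differentiable (at q)" if "q \<in> \<Omega>" for k j q
    using smooth_P[of k] that unfolding smooth_on_def by (metis iter_pd.simps)+
  have y_x: "y - x \<noteq> 0" using assms(5) by simp
  have Lop_pairing: "Lop (diff_pairing P unit_comp) x y
      = (\<Sum>k\<in>UNIV. ((\<Sum>i\<in>UNIV. pd i (pd i (P k)) y) - (\<Sum>i\<in>UNIV. pd i (pd i (P k)) x)) * unit_comp k (y - x))"
    by (rule Lop_diff_pairing[where \<delta> = unit_comp_d])
      (use assms P_diff unit_comp_euler1[OF y_x] unit_comp_euler2[OF y_x]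
        in \<open>auto simp: pd_unit_comp intro: unit_comp_differentiable unit_comp_d_differentiable\<close>)
  have pairing_v: "(\<lambda>x y. (grad v y - grad v x) \<bullet> ((1 / norm (y - x)) *\<^sub>R (y - x)))
      = diff_pairing P unit_comp"
    unfolding grad_diff_dot_unit P_def[abs_def] ..
  have "Lop (diff_pairing P unit_comp) x y
      = (\<Sum>k\<in>UNIV. (pd k (lap v) y - pd k (lap v) x) * unit_comp k (y - x))"
    unfolding Lop_pairing P_def pd_lap[OF assms(1,2,3)] pd_lap[OF assms(1,2,4)] ..
  also have "\<dots> = (grad (lap v) y - grad (lap v) x) \<bullet> ((1 / norm (y - x)) *\<^sub>R (y - x))"
    unfolding grad_diff_dot_unit diff_pairing_def ..
  finally show ?thesis unfolding pairing_v .
qed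

end
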